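(* Assume Assumption (S). For $v$ defined on $\Omega$ with well-defined point values, let $P^*v\in\mathbb V^k$ be the piecewise interpolation polynomial with, on each $I_i$, $(P^*v)(x_{i,j})=v(x_{i,j})$ for $j=1,\dots,k$ and $(P^*v)(x_{i+\frac12}^-)=v(x_{i+\frac12}^-)$, and let $\eta^*=v-P^*v$. Then: (1) there is a constant $C$ independent of $v$ (and of the mesh) such that $\|\eta^*\|\le Ch^{k+1}\|\partial_x^{k+1}v\|_{L^\infty(\Omega)}$; (2) if $v$ is continuous, then $\mathcal H^*(\eta^*,\omega)=0$ for all $\omega\in\mathbb V^k$.
   Context: Let $\Omega=[a,b]$ be partitioned into finitely many cells $I_i=[x_{i-\frac12},x_{i+\frac12}]$ with sizes $h_i$, $h=\max_ih_i$, quasi-uniform ($h\le Ch_i$, fixed $C$); indices periodic. $\|\cdot\|$: $L^2(\Omega)$ norm; $(\cdot,\cdot)_{I_i}$: $L^2(I_i)$ inner product. $\mathbb V^k=\{v\in L^2(\Omega): v|_{I_i}\in\mathbb P^k(I_i)\ \forall i\}$. Each $I_i$ has subdivision points $x_{i-\frac12}=x_{i,0}<x_{i,1}<\dots<x_{i,k}<x_{i,k+1}=x_{i+\frac12}$. Quadrature on $I_i$: $Q_i^k(v)=\sum_{j=0}^{k+1}A_{i,j}v(x_{i,j})$ (applied to restrictions to $I_i$, endpoint values taken as limits from inside $I_i$), error $R_i^k(v)=\int_{I_i}v\,dx-Q_i^k(v)$, exact on $\mathbb P^{k-1}(I_i)$. $L_{i,\ell}$: shifted Legendre polynomial of degree $\ell$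 on $I_i$, $L_{i,\ell}(x_{i+\frac12})=1$, $(L_{i,\ell},L_{i,m})_{I_i}=\delta_{\ell m}h_i/(2\ell+1)$. Assumption (S): $k\ge1$ and for every $i$, $R_i^k$ vanishes on $\mathbb P^{2k-1}(I_i)$ and $\frac{h_i}{2k-1}-Q_i^k(L_{i,k+1}L_{i,k-1})>0$. Jumps $[\![v]\!]_{i+\frac12}=v(x_{i+\frac12}^+)-v(x_{i+\frac12}^-)$. For $\omega\in\mathbb V^k$ and piecewise smooth $v$: $\mathcal H^*(v,\omega)=\beta\big(\sum_iQ_i^k(v\omega_x)+\sum_iv(x_{i+\frac12}^-)[\![\omega]\!]_{i+\frac12}-\sum_iA_{i,0}\omega_x(x_{i-\frac12}^+)[\![v]\!]_{i-\frac12}\big)$, $\beta>0$ constant. *)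

theory Defs
  imports "HOL-Analysis.Analysis" "HOL-Computational_Algebra.Polynomial"
begin

text \<open>Cell indices are periodic modulo N.
  Piecewise functions are represented cellwise: f :: nat \<Rightarrow> real \<Rightarrow> real,
  where f i is the restriction of the function to the closed cell i
  (endpoint values = limits from inside the cell).\<close>

definition mesh_ok :: "real \<Rightarrow> real \<Rightarrow> nat \<Rightarrow> nat \<Rightarrow> (nat \<Rightarrow> real) \<Rightarrow> (nat \<Rightarrow> nat \<Rightarrow> real) \<Rightarrow> bool" where
  "mesh_ok a b k N p s \<longleftrightarrow> N \<ge> 1 \<and> p 0 = a \<and> p N = b \<and>
     (\<forall>i<N. p i < p (Suc i)) \<and>
     (\<forall>i<N. s i 0 = p i \<and> s i (k+1) = p (Suc i) \<and> (\<forall>j\<le>k. s i j < s i (Suc j)))"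

definition cell_size :: "(nat \<Rightarrow> real) \<Rightarrow> nat \<Rightarrow> real" where
  "cell_size p i = p (Suc i) - p i"

definition mesh_size :: "nat \<Rightarrow> (nat \<Rightarrow> real) \<Rightarrow> real" where
  "mesh_size N p = Max (cell_size p ` {..<N})"

definition quasi_uniform :: "real \<Rightarrow> nat \<Rightarrow> (nat \<Rightarrow> real) \<Rightarrow> bool" where
  "quasi_uniform Cq N p \<longleftrightarrow> (\<forall>i<N. mesh_size N p \<le> Cq * cell_size p i)"

definition quad :: "nat \<Rightarrow> (nat \<Rightarrow> nat \<Rightarrow> real) \<Rightarrow> (nat \<Rightarrow> nat \<Rightarrow> real) \<Rightarrow> nat \<Rightarrow> (real \<Rightarrow> real) \<Rightarrow> real" where
  "quad k s A i g = (\<Sum>j\<le>k+1. A i j * g (s i j))"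

text \<open>Shifted Legendre polynomial of degree l on [c,d] (Rodrigues formula):
  L(x) = 1/(l! (d-c)^l) * (d/dx)^l [((x-c)(x-d))^l];  L(d) = 1, norm^2 = (d-c)/(2l+1).\<close>
definition shifted_legendre :: "real \<Rightarrow> real \<Rightarrow> nat \<Rightarrow> real poly" where
  "shifted_legendre c d l =
     smult (1 / (fact l * (d - c) ^ l)) ((pderiv ^^ l) (([:-c, 1:] * [:-d, 1:]) ^ l))"

definition legendre_cell :: "(nat \<Rightarrow> real) \<Rightarrow> nat \<Rightarrow> nat \<Rightarrow> real poly" where
  "legendre_cell p i l = shifted_legendre (p i) (p (Suc i)) l"

definition assumption_S :: "nat \<Rightarrow> nat \<Rightarrow> (nat \<Rightarrow> real) \<Rightarrow> (nat \<Rightarrow> nat \<Rightarrow> real) \<Rightarrow> (nat \<Rightarrow> nat \<Rightarrow> real) \<Rightarrow> bool" where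
  "assumption_S k N p s A \<longleftrightarrow> k \<ge> 1 \<and>
     (\<forall>i<N. (\<forall>q :: real poly. degree q \<le> 2*k - 1 \<longrightarrow>
               integral {p i..p (Suc i)} (poly q) - quad k s A i (poly q) = 0) \<and>
            cell_size p i / (2*k - 1) -
              quad k s A i (poly (legendre_cell p i (k+1) * legendre_cell p i (k-1))) > 0)"

definition in_Vk :: "nat \<Rightarrow> nat \<Rightarrow> (nat \<Rightarrow> real poly) \<Rightarrow> bool" where
  "in_Vk k N w \<longleftrightarrow> (\<forall>i<N. degree (w i) \<le> k)"

text \<open>Interpolation P^* v on cell i: the polynomial of degree \<le> k agreeing with v at
  x_{i,1},...,x_{i,k} and at x_{i+1/2} (here v is continuous, so v(x_{i+1/2}^-) = v(x_{i+1/2})).\<close>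
definition Pstar :: "nat \<Rightarrow> (nat \<Rightarrow> nat \<Rightarrow> real) \<Rightarrow> (real \<Rightarrow> real) \<Rightarrow> nat \<Rightarrow> real poly" where
  "Pstar k s v i = (THE q. degree q \<le> k \<and> (\<forall>j\<in>{1..k+1}. poly q (s i j) = v (s i j)))"

definition eta_star :: "nat \<Rightarrow> (nat \<Rightarrow> nat \<Rightarrow> real) \<Rightarrow> (real \<Rightarrow> real) \<Rightarrow> nat \<Rightarrow> real \<Rightarrow> real" where
  "eta_star k s v i x = v x - poly (Pstar k s v i) x"

definition L2norm :: "nat \<Rightarrow> (nat \<Rightarrow> real) \<Rightarrow> (nat \<Rightarrow> real \<Rightarrow> real) \<Rightarrow> real" where
  "L2norm N p f = sqrt (\<Sum>i<N. integral {p i..p (Suc i)} (\<lambda>x. (f i x)\<^sup>2))"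

definition jump :: "nat \<Rightarrow> (nat \<Rightarrow> real) \<Rightarrow> (nat \<Rightarrow> real \<Rightarrow> real) \<Rightarrow> nat \<Rightarrow> real" where
  "jump N p f i = f ((i+1) mod N) (p ((i+1) mod N)) - f i (p (Suc i))"

text \<open>The bilinear form H^*(v, w); [v]_{i-1/2} is the jump at index (i+N-1) mod N.\<close>
definition Hstar :: "real \<Rightarrow> nat \<Rightarrow> nat \<Rightarrow> (nat \<Rightarrow> real) \<Rightarrow> (nat \<Rightarrow> nat \<Rightarrow> real) \<Rightarrow> (nat \<Rightarrow> nat \<Rightarrow> real)
     \<Rightarrow> (nat \<Rightarrow> real \<Rightarrow> real) \<Rightarrow> (nat \<Rightarrow> real poly) \<Rightarrow> real" where
  "Hstar \<beta> k N p s A v w = \<beta> *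
     ((\<Sum>i<N. quad k s A i (\<lambda>x. v i x * poly (pderiv (w i)) x))
      + (\<Sum>i<N. v i (p (Suc i)) * jump N p (\<lambda>i. poly (w i)) i)
      - (\<Sum>i<N. A i 0 * poly (pderiv (w i)) (p i) * jump N p v ((i + N - 1) mod N)))"

end

theory Submission
  imports Defs
begin

text \<open>On a cell, P*v interpolates v at the k+1 distinct points x(i,1), ..., x(i,k+1).
  Applying Rolle's theorem k+1 times to v - P*v - \<gamma> \<omega>, where \<omega> is the nodal polynomial and
  \<gamma> is chosen so that this function also vanishes at a given point x, gives the classical
  error formula v(x) - P*v(x) = v^(k+1)(\<xi>) / (k+1)! * \<omega>(x). Hence |\<eta>*| \<le> M h^(k+1) / (k+1)!
  pointwise, and the L2 bound holds with C = sqrt(b - a) / (k+1)!.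

  For the second claim, \<eta>* vanishes at every quadrature node of a cell except its left
  endpoint; in particular its right-endpoint values, and with them the boundary sum of H*,
  vanish. Each quadrature sum then reduces to A(i,0) \<omega>'(x(i-1/2)+) \<eta>*(x(i-1/2)+), which is
  exactly the jump term, since [\<eta>*](i-1/2) = \<eta>*(x(i-1/2)+).\<close>

lemma Rolle_within:
  fixes f f' :: "real \<Rightarrow> real"
  assumes der: "\<And>x. x \<in> {c..d} \<Longrightarrow> (f has_real_derivative f' x) (at x within {c..d})"
    and uw: "c \<le> u" "u < w" "w \<le> d" and "f u = f w"
  obtains y where "u < y" "y < w" "f' y = 0"
proof -
  have "continuous_on {u..w} f"
    by (rule DERIV_continuous_on[of _ _ f']) (rule has_field_derivative_subset[OF der], use uw in auto)
  moreover have "(f has_derivative (\<lambda>v. f' x * v)) (at x)" if "u < x" "x < w" for x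
  proof -
    have "x \<in> interior {c..d}" using that uw by auto
    then have "at x within {c..d} = at x" by (rule at_within_interior)
    then show ?thesis
      using der[of x] that uw by (simp add: has_field_derivative_def)
  qed
  ultimately obtain y where y: "u < y" "y < w" "(\<lambda>v. f' y * v) = (\<lambda>v. 0)"
    using Rolle_deriv[OF \<open>u < w\<close> \<open>f u = f w\<close>, of "\<lambda>x v. f' x * v"] by blast
  from fun_cong[OF y(3), of 1] have "f' y = 0" by simp
  with y show ?thesis using that by blast
qed

lemma Rolle_zeros:
  fixes f f' :: "real \<Rightarrow> real"
  assumes der: "\<And>x. x \<in> {c..d} \<Longrightarrow> (f has_real_derivative f' x) (at x within {c..d})"
  shows "finite Z \<Longrightarrow> card Z = Suc n \<Longrightarrow> Z \<subseteq> {c..d} \<Longrightarrow> (\<And>z. z \<in> Z \<Longrightarrow> f z = 0) \<Longrightarrow>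
    \<exists>Y. finite Y \<and> card Y = n \<and> Y \<subseteq> {c..<Max Z} \<and> (\<forall>y\<in>Y. f' y = 0)"
proof (induction n arbitrary: Z)
  case 0
  then show ?case by (intro exI[of _ "{}"]) auto
next
  case (Suc n)
  define Z' where "Z' = Z - {Max Z}"
  have "Z \<noteq> {}" using Suc.prems by auto
  then have Max_Z: "Max Z \<in> Z" using Suc.prems(1) by simp
  have Z': "finite Z'" "card Z' = Suc n" "Z' \<subseteq> {c..d}" "\<And>z. z \<in> Z' \<Longrightarrow> f z = 0"
    using Suc.prems Max_Z by (auto simp: Z'_def)
  then have "Z' \<noteq> {}" by auto
  then obtain Y where Y: "finite Y" "card Y = n" "Y \<subseteq> {c..<Max Z'}" "\<forall>y\<in>Y. f' y = 0"
    using Suc.IH[OF Z'] by blast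
  have Max_Z': "Max Z' \<in> Z'" using Z' \<open>Z' \<noteq> {}\<close> by simp
  have less: "Max Z' < Max Z"
    using Max_Z' Suc.prems(1) by (auto simp: Z'_def less_le)
  obtain y where y: "Max Z' < y" "y < Max Z" "f' y = 0"
    using Rolle_within[OF der _ less] Max_Z Max_Z' Suc.prems(3,4) by (force simp: Z'_def)
  have "y \<notin> Y" using Y(3) y by auto
  then show ?case
    using Y y Max_Z' Z'(3) less by (intro exI[of _ "insert y Y"]) (auto simp: Z'_def)
qed

lemma Rolle_higher_deriv:
  fixes D :: "nat \<Rightarrow> real \<Rightarrow> real"
  assumes "\<And>m x. m < n \<Longrightarrow> x \<in> {c..d} \<Longrightarrow> (D m has_real_derivative D (Suc m) x) (at x within {c..d})"
    and "finite Z" "card Z = Suc n" "Z \<subseteq> {c..d}" "\<And>z. z \<in> Z \<Longrightarrow> D 0 z = 0"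
  shows "\<exists>\<xi>\<in>{c..d}. D n \<xi> = 0"
  using assms
proof (induction n arbitrary: D Z)
  case 0
  then obtain z where "z \<in> Z" by fastforce
  then show ?case using 0 by auto
next
  case (Suc n)
  obtain Y where Y: "finite Y" "card Y = Suc n" "Y \<subseteq> {c..<Max Z}" "\<forall>y\<in>Y. D 1 y = 0"
    using Rolle_zeros[of c d "D 0" "D 1" Z "Suc n"] Suc.prems by auto
  have "Max Z \<in> Z" using Suc.prems(2,3) by (intro Max_in) auto
  then have "Y \<subseteq> {c..d}" using Y(3) Suc.prems(4) by force
  then show ?case using Suc.IH[of "\<lambda>m. D (Suc m)" Y] Suc.prems(1) Y by auto
qed

lemma higher_pderiv_eq_const:
  fixes q :: "real poly"
  assumes "degree q \<le> n"
  shows "(pderiv ^^ n) q = [:fact n * coeff q n:]"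
proof -
  have "degree ((pderiv ^^ n) q) = 0" using assms by (simp add: degree_higher_pderiv)
  then show ?thesis
    by (subst degree_0_id[symmetric]) (simp_all add: coeff_higher_pderiv pochhammer_fact)
qed

lemma poly_interpolation_exists:
  fixes X :: "real set" and f :: "real \<Rightarrow> real"
  assumes "finite X" "card X = Suc n"
  shows "\<exists>q. degree q \<le> n \<and> (\<forall>x\<in>X. poly q x = f x)"
proof -
  define L where "L x = (\<Prod>y\<in>X-{x}. [:-y, 1:])" for x
  define q where "q = (\<Sum>x\<in>X. smult (f x / poly (L x) x) (L x))"
  have degree_L: "degree (L x) \<le> n" if "x \<in> X" for x
  proof -
    have "degree (L x) \<le> (\<Sum>y\<in>X-{x}. degree [:-y, 1::real:])"
      using degree_prod_sum_le[of "X-{x}" "\<lambda>y. [:-y, 1::real:]"] assms(1)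
      by (simp add: L_def o_def)
    also have "\<dots> = n" using assms that by simp
    finally show ?thesis .
  qed
  have poly_L: "poly (L x) z = (\<Prod>y\<in>X-{x}. z - y)" for x z
    by (simp add: L_def poly_prod)
  have "degree q \<le> n"
    unfolding q_def using degree_L by (intro degree_sum_le[OF assms(1)]) (meson degree_smult_le order_trans)
  moreover have "poly q z = f z" if z: "z \<in> X" for z
  proof -
    have "poly (L x) z = 0" if "x \<in> X - {z}" for x
      using that z assms(1) unfolding poly_L by (intro prod_zero) auto
    then have "poly q z = f z / poly (L z) z * poly (L z) z"
      by (simp add: q_def poly_sum sum.remove[OF assms(1) z])
    also have "\<dots> = f z"
      using assms(1) by (simp add: poly_L)
    finally show ?thesis .
  qed
  ultimately show ?thesis by blast
qed

lemma interpolation_error: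
  fixes D :: "nat \<Rightarrow> real \<Rightarrow> real" and q :: "real poly"
  assumes der: "\<And>m t. m \<le> n \<Longrightarrow> t \<in> {c..d} \<Longrightarrow>
      (D m has_real_derivative D (Suc m) t) (at t within {c..d})"
    and X: "finite X" "card X = Suc n" "X \<subseteq> {c..d}"
    and q: "degree q \<le> n" "\<And>y. y \<in> X \<Longrightarrow> poly q y = D 0 y"
    and x: "x \<in> {c..d}"
  shows "\<exists>\<xi>\<in>{c..d}. D 0 x - poly q x = D (Suc n) \<xi> / fact (Suc n) * (\<Prod>y\<in>X. x - y)"
proof (cases "x \<in> X")
  case True
  then show ?thesis using x q(2) X(1) by auto
next
  case False
  define W where "W = (\<Prod>y\<in>X. [:-y, 1:])"
  have poly_W: "poly W t = (\<Prod>y\<in>X. t - y)" for t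
    by (simp add: W_def poly_prod)
  have "poly W x \<noteq> 0" using False X(1) unfolding poly_W by auto
  define \<gamma> where "\<gamma> = (D 0 x - poly q x) / poly W x"
  define G where "G m t = D m t - poly ((pderiv ^^ m) q) t - \<gamma> * poly ((pderiv ^^ m) W) t" for m t
  have G_deriv: "(G m has_real_derivative G (Suc m) t) (at t within {c..d})"
    if "m < Suc n" "t \<in> {c..d}" for m t
    unfolding G_def using that
    by (intro DERIV_diff DERIV_cmult der) (auto intro: DERIV_subset[OF poly_DERIV])
  have G_zeros: "G 0 z = 0" if "z \<in> insert x X" for z
    using that q(2) \<open>poly W x \<noteq> 0\<close> X(1) by (auto simp: G_def \<gamma>_def poly_W)
  obtain \<xi> where \<xi>: "\<xi> \<in> {c..d}" "G (Suc n) \<xi> = 0"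
    using Rolle_higher_deriv[of "Suc n" c d G "insert x X", OF G_deriv _ _ _ G_zeros] X x False
    by auto
  have "(pderiv ^^ Suc n) q = 0"
    using higher_pderiv_eq_const[of q "Suc n"] q(1) by (simp add: coeff_eq_0)
  moreover have "(pderiv ^^ Suc n) W = [:fact (Suc n):]"
  proof -
    have "degree W = Suc n" "coeff W (Suc n) = 1"
      using X(1,2) lead_coeff_prod[of "\<lambda>y. [:-y, 1::real:]" X]
      by (simp_all add: W_def degree_prod_eq_sum_degree)
    then show ?thesis using higher_pderiv_eq_const[of W "Suc n"] by simp
  qed
  ultimately have "D (Suc n) \<xi> = \<gamma> * fact (Suc n)"
    using \<xi>(2) by (simp add: G_def)
  then show ?thesis
    using \<xi>(1) \<open>poly W x \<noteq> 0\<close> by (intro bexI[of _ \<xi>]) (simp_all add: \<gamma>_def poly_W)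
qed

lemma interpolation_error_bound:
  fixes D :: "nat \<Rightarrow> real \<Rightarrow> real" and q :: "real poly"
  assumes der: "\<And>m t. m \<le> n \<Longrightarrow> t \<in> {c..d} \<Longrightarrow>
      (D m has_real_derivative D (Suc m) t) (at t within {c..d})"
    and bound: "\<And>t. t \<in> {c..d} \<Longrightarrow> \<bar>D (Suc n) t\<bar> \<le> M"
    and X: "finite X" "card X = Suc n" "X \<subseteq> {c..d}"
    and q: "degree q \<le> n" "\<And>y. y \<in> X \<Longrightarrow> poly q y = D 0 y"
    and x: "x \<in> {c..d}"
  shows "\<bar>D 0 x - poly q x\<bar> \<le> M * (d - c) ^ Suc n / fact (Suc n)"
proof -
  obtain \<xi> where \<xi>: "\<xi> \<in> {c..d}"
    and err: "D 0 x - poly q x = D (Suc n) \<xi> / fact (Suc n) * (\<Prod>y\<in>X. x - y)"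
    using interpolation_error[OF der X q x] by blast
  have "(\<Prod>y\<in>X. \<bar>x - y\<bar>) \<le> (\<Prod>y\<in>X. d - c)"
    using X(3) x by (intro prod_mono) (auto simp: abs_le_iff dest!: subsetD[OF X(3)])
  then have "\<bar>\<Prod>y\<in>X. x - y\<bar> \<le> (d - c) ^ Suc n"
    using X(2) by (simp add: abs_prod)
  moreover have "\<bar>D (Suc n) \<xi>\<bar> / fact (Suc n) \<le> M / fact (Suc n)"
    using bound[OF \<xi>] by (simp add: divide_right_mono)
  ultimately have "\<bar>D (Suc n) \<xi>\<bar> / fact (Suc n) * \<bar>\<Prod>y\<in>X. x - y\<bar> \<le> M / fact (Suc n) * (d - c) ^ Suc n"
    using bound[OF \<xi>] by (intro mult_mono) auto
  then show ?thesis by (simp add: err abs_mult)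
qed

lemma mesh_node_less:
  assumes "mesh_ok a b k N p s" "i < N" "j < l" "l \<le> k + 1"
  shows "s i j < s i l"
  by (rule lift_Suc_mono_less_ivl[of "{..k}" "s i"]) (use assms in \<open>auto simp: mesh_ok_def\<close>)

lemma mesh_node_in_cell:
  assumes "mesh_ok a b k N p s" "i < N" "j \<le> k + 1"
  shows "s i j \<in> {p i..p (Suc i)}"
proof -
  have "s i 0 \<le> s i j" "s i j \<le> s i (k + 1)"
    using mesh_node_less[OF assms(1,2), of 0 j] mesh_node_less[OF assms(1,2), of j "k + 1"] assms(3)
    by (cases "j = 0", simp_all, cases "j = k + 1", simp_all)
  then show ?thesis using assms(1,2) by (simp add: mesh_ok_def)
qed

lemma mesh_cell_subset:
  assumes "mesh_ok a b k N p s" "i < N"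
  shows "{p i..p (Suc i)} \<subseteq> {a..b}"
proof -
  have mono: "p m \<le> p m'" if "m \<le> m'" "m' \<le> N" for m m'
    by (rule lift_Suc_mono_le_ivl[of "{..<N}" p])
       (use assms(1) that in \<open>auto simp: mesh_ok_def less_imp_le\<close>)
  show ?thesis using mono[of 0 i] mono[of "Suc i" N] assms by (auto simp: mesh_ok_def)
qed

lemma card_mesh_nodes:
  assumes "mesh_ok a b k N p s" "i < N"
  shows "card (s i ` {1..k+1}) = Suc k"
proof -
  have "inj_on (s i) {1..k+1}"
  proof (rule inj_onI)
    fix j l assume "j \<in> {1..k+1}" "l \<in> {1..k+1}" "s i j = s i l"
    then show "j = l"
      using mesh_node_less[OF assms, of j l] mesh_node_less[OF assms, of l j]
      by (cases j l rule: linorder_cases) auto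
  qed
  then show ?thesis by (simp add: card_image)
qed

lemma Pstar_interpolates:
  assumes "mesh_ok a b k N p s" "i < N"
  shows "degree (Pstar k s v i) \<le> k" "\<And>j. j \<in> {1..k+1} \<Longrightarrow> poly (Pstar k s v i) (s i j) = v (s i j)"
proof -
  let ?X = "s i ` {1..k+1}"
  have card_X: "card ?X = Suc k" by (rule card_mesh_nodes[OF assms])
  obtain q where q: "degree q \<le> k" "\<forall>x\<in>?X. poly q x = v x"
    using poly_interpolation_exists[OF _ card_X] by blast
  have "\<exists>!q. degree q \<le> k \<and> (\<forall>j\<in>{1..k+1}. poly q (s i j) = v (s i j))"
  proof (rule ex1I[of _ q])
    fix r assume "degree r \<le> k \<and> (\<forall>j\<in>{1..k+1}. poly r (s i j) = v (s i j))"
    then show "r = q" using q card_X by (intro poly_eqI_degree[of ?X]) auto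
  qed (use q in auto)
  from theI'[OF this] show "degree (Pstar k s v i) \<le> k"
    "\<And>j. j \<in> {1..k+1} \<Longrightarrow> poly (Pstar k s v i) (s i j) = v (s i j)"
    unfolding Pstar_def by auto
qed

lemma eta_star_at_node:
  assumes "mesh_ok a b k N p s" "i < N" "j \<in> {1..k+1}"
  shows "eta_star k s v i (s i j) = 0"
  using Pstar_interpolates(2)[OF assms] by (simp add: eta_star_def)

lemma eta_star_right_endpoint:
  assumes "mesh_ok a b k N p s" "i < N"
  shows "eta_star k s v i (p (Suc i)) = 0"
  using eta_star_at_node[OF assms, of "k+1"] assms by (simp add: mesh_ok_def)

lemma quad_eta_star_mult:
  assumes "mesh_ok a b k N p s" "i < N"
  shows "quad k s A i (\<lambda>x. eta_star k s v i x * g x) = A i 0 * g (p i) * eta_star k s v i (p i)"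
proof -
  have "(\<Sum>j\<le>k. A i (Suc j) * (eta_star k s v i (s i (Suc j)) * g (s i (Suc j)))) = 0"
    using eta_star_at_node[OF assms] by (intro sum.neutral) auto
  moreover have "s i 0 = p i" using assms by (simp add: mesh_ok_def)
  ultimately show ?thesis
    unfolding quad_def by (simp add: sum.atMost_Suc_shift del: sum.atMost_Suc)
qed

lemma jump_eta_star_left_endpoint:
  assumes "mesh_ok a b k N p s" "i < N"
  shows "jump N p (eta_star k s v) ((i + N - 1) mod N) = eta_star k s v i (p i)"
proof -
  have "((i + N - 1) mod N + 1) mod N = i"
    using assms(2) by (cases i) (simp_all add: mod_Suc_eq)
  then show ?thesis
    using eta_star_right_endpoint[OF assms(1), of "(i + N - 1) mod N"] assms(2)
    by (simp add: jump_def)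
qed

lemma Hstar_eta_star:
  assumes "mesh_ok a b k N p s"
  shows "Hstar \<beta> k N p s A (eta_star k s v) w = 0"
proof -
  let ?\<eta> = "eta_star k s v" and ?w' = "\<lambda>i. poly (pderiv (w i))"
  have "(\<Sum>i<N. quad k s A i (\<lambda>x. ?\<eta> i x * ?w' i x)) =
        (\<Sum>i<N. A i 0 * ?w' i (p i) * jump N p ?\<eta> ((i + N - 1) mod N))"
  proof (rule sum.cong[OF refl])
    fix i assume "i \<in> {..<N}"
    then show "quad k s A i (\<lambda>x. ?\<eta> i x * ?w' i x) = A i 0 * ?w' i (p i) * jump N p ?\<eta> ((i + N - 1) mod N)"
      using assms by (simp only: quad_eta_star_mult jump_eta_star_left_endpoint lessThan_iff)
  qed
  moreover have "(\<Sum>i<N. ?\<eta> i (p (Suc i)) * jump N p (\<lambda>i. poly (w i)) i) = 0"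
    using eta_star_right_endpoint[OF assms] by (intro sum.neutral) auto
  ultimately show ?thesis by (simp add: Hstar_def)
qed

lemma L2norm_le:
  assumes "\<And>i. i < N \<Longrightarrow> p i \<le> p (Suc i)"
    and "\<And>i. i < N \<Longrightarrow> continuous_on {p i..p (Suc i)} (f i)"
    and "\<And>i x. i < N \<Longrightarrow> x \<in> {p i..p (Suc i)} \<Longrightarrow> \<bar>f i x\<bar> \<le> B"
  shows "L2norm N p f \<le> sqrt (p N - p 0) * B"
proof (cases "N = 0")
  case True
  then show ?thesis by (simp add: L2norm_def)
next
  case False
  then have "0 \<le> B" using assms(1,3)[of 0] by force
  have "integral {p i..p (Suc i)} (\<lambda>x. (f i x)\<^sup>2) \<le> (p (Suc i) - p i) * B\<^sup>2" if "i < N" for i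
  proof -
    have "integral {p i..p (Suc i)} (\<lambda>x. (f i x)\<^sup>2) \<le> integral {p i..p (Suc i)} (\<lambda>x. B\<^sup>2)"
      using assms that \<open>0 \<le> B\<close>
      by (intro integral_le integrable_continuous_interval continuous_intros)
         (auto simp flip: abs_le_square_iff)
    then show ?thesis using assms(1)[OF that] by simp
  qed
  then have "(\<Sum>i<N. integral {p i..p (Suc i)} (\<lambda>x. (f i x)\<^sup>2)) \<le> (\<Sum>i<N. (p (Suc i) - p i) * B\<^sup>2)"
    by (intro sum_mono) auto
  also have "\<dots> = (p N - p 0) * B\<^sup>2"
    by (simp add: sum_distrib_right[symmetric] sum_lessThan_telescope)
  finally have "L2norm N p f \<le> sqrt ((p N - p 0) * B\<^sup>2)"
    unfolding L2norm_def by (rule real_sqrt_le_mono)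
  then show ?thesis using \<open>0 \<le> B\<close> by (simp add: real_sqrt_mult)
qed

lemma cell_size_le_mesh_size:
  assumes "i < N"
  shows "cell_size p i \<le> mesh_size N p"
  using assms unfolding mesh_size_def by (intro Max_ge) auto

lemma eta_star_bound:
  assumes mesh: "mesh_ok a b k N p s" and i: "i < N"
    and D0: "\<forall>x\<in>{a..b}. D 0 x = v x"
    and der: "\<forall>m\<le>k. \<forall>x\<in>{a..b}. (D m has_real_derivative D (Suc m) x) (at x within {a..b})"
    and bound: "\<forall>x\<in>{a..b}. \<bar>D (k+1) x\<bar> \<le> M"
    and x: "x \<in> {p i..p (Suc i)}"
  shows "\<bar>eta_star k s v i x\<bar> \<le> M * cell_size p i ^ (k+1) / fact (k+1)"
proof -
  have cell: "{p i..p (Suc i)} \<subseteq> {a..b}" by (rule mesh_cell_subset[OF mesh i])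
  let ?X = "s i ` {1..k+1}"
  have "\<bar>D 0 x - poly (Pstar k s v i) x\<bar> \<le> M * (p (Suc i) - p i) ^ Suc k / fact (Suc k)"
  proof (rule interpolation_error_bound)
    show "(D m has_real_derivative D (Suc m) t) (at t within {p i..p (Suc i)})"
      if "m \<le> k" "t \<in> {p i..p (Suc i)}" for m t
      using der that cell by (intro has_field_derivative_subset[OF _ cell]) auto
    show "\<bar>D (Suc k) t\<bar> \<le> M" if "t \<in> {p i..p (Suc i)}" for t
      using bound that cell by auto
    show "?X \<subseteq> {p i..p (Suc i)}" using mesh_node_in_cell[OF mesh i] by auto
    show "poly (Pstar k s v i) y = D 0 y" if "y \<in> ?X" for y
      using that Pstar_interpolates(2)[OF mesh i] mesh_node_in_cell[OF mesh i] D0 cell by fastforce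
  qed (use x Pstar_interpolates(1)[OF mesh i] card_mesh_nodes[OF mesh i] in auto)
  then show ?thesis
    using D0 x cell by (auto simp: eta_star_def cell_size_def)
qed

lemma eta_star_L2_bound:
  assumes mesh: "mesh_ok a b k N p s"
    and D0: "\<forall>x\<in>{a..b}. D 0 x = v x"
    and der: "\<forall>m\<le>k. \<forall>x\<in>{a..b}. (D m has_real_derivative D (Suc m) x) (at x within {a..b})"
    and bound: "\<forall>x\<in>{a..b}. \<bar>D (k+1) x\<bar> \<le> M"
  shows "L2norm N p (eta_star k s v) \<le> sqrt (b - a) / fact (k+1) * mesh_size N p ^ (k+1) * M"
proof -
  have cell_pos: "p i < p (Suc i)" if "i < N" for i
    using mesh that by (simp add: mesh_ok_def)
  have "0 \<le> M" using bound cell_pos[of 0] mesh_cell_subset[OF mesh, of 0] mesh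
    by (force simp: mesh_ok_def)
  have "continuous_on {a..b} (D 0)"
    by (rule DERIV_continuous_on[of _ _ "D 1"]) (use der in auto)
  then have "continuous_on {a..b} v"
    using D0 continuous_on_cong by blast
  then have "continuous_on {p i..p (Suc i)} (eta_star k s v i)" if "i < N" for i
    unfolding eta_star_def
    by (intro continuous_intros continuous_on_subset[OF _ mesh_cell_subset[OF mesh that]])
  moreover have "\<bar>eta_star k s v i x\<bar> \<le> M * mesh_size N p ^ (k+1) / fact (k+1)"
    if "i < N" "x \<in> {p i..p (Suc i)}" for i x
  proof -
    have "M * cell_size p i ^ (k+1) / fact (k+1) \<le> M * mesh_size N p ^ (k+1) / fact (k+1)"
      using cell_size_le_mesh_size[OF that(1)] cell_pos[OF that(1)] \<open>0 \<le> M\<close>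
      by (intro divide_right_mono mult_left_mono power_mono) (auto simp: cell_size_def)
    then show ?thesis
      using eta_star_bound[OF mesh that(1) D0 der bound that(2)] by linarith
  qed
  ultimately have "L2norm N p (eta_star k s v) \<le> sqrt (p N - p 0) * (M * mesh_size N p ^ (k+1) / fact (k+1))"
    using cell_pos by (intro L2norm_le) (auto simp: less_imp_le)
  then show ?thesis using mesh by (simp add: mesh_ok_def field_simps)
qed

theorem proposition4p19:
  fixes a b Cq :: real and k :: nat
  assumes "a < b"
  shows
   "(\<exists>C. \<forall>N p s A v D M.
        mesh_ok a b k N p s \<and> quasi_uniform Cq N p \<and> assumption_S k N p s A \<and>
        (\<forall>x\<in>{a..b}. D 0 x = v x) \<and>
        (\<forall>m\<le>k. \<forall>x\<in>{a..b}. (D m has_real_derivative D (Suc m) x) (at x within {a..b})) \<and>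
        (\<forall>x\<in>{a..b}. \<bar>D (k+1) x\<bar> \<le> M)
        \<longrightarrow> L2norm N p (eta_star k s v) \<le> C * mesh_size N p ^ (k+1) * M)
    \<and> (\<forall>N p s A v w \<beta>.
        mesh_ok a b k N p s \<and> quasi_uniform Cq N p \<and> assumption_S k N p s A \<and>
        continuous_on {a..b} v \<and> in_Vk k N w \<and> \<beta> > 0
        \<longrightarrow> Hstar \<beta> k N p s A (eta_star k s v) w = 0)"
  using eta_star_L2_bound Hstar_eta_star
  by (intro conjI exI[of _ "sqrt (b - a) / fact (k+1)"] allI impI) blast+

end
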